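(* In the discrete setting described in the context, suppose $x\in M$ satisfies $w^t(x)=w^{t-1}(x)+c^t(x)$. If $c^t(z)\ge c^t(x)$ for all $z\in M$ with $z\ge x$, then $w^t(z)\ge w^{t-1}(z)+c^t(x)$ for all $z\in M$ with $z\ge x$. Similarly, if $c^t(z)\ge c^t(x)$ for all $z\in M$ with $z\le x$, then $w^t(z)\ge w^{t-1}(z)+c^t(x)$ for all $z\in M$ with $z\le x$.
   Context: Discrete setting: a finite set of states $M=\{x_1,\dots,x_m\}\subset\mathbb{R}^+$ with $x_1=0$ and equal spacing $x_{k+1}-x_k=\delta$; a norm $\|\cdot\|$ on $\mathbb{R}$; $\theta\ge1$ and $N(\cdot)=\theta\|\cdot\|$; cost functions $c^t:M\to\mathbb{R}^+$. Work function: $w^0(x)=N(x)$ and $w^t(x)=\min_{y\in M}\{w^{t-1}(y)+c^t(y)+\theta\|x-y\|\}$ for $x\in M$. *)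

theory Defs
  imports Main "HOL.Real"
begin

definition is_norm_R :: "(real \<Rightarrow> real) \<Rightarrow> bool" where
  "is_norm_R nrm \<longleftrightarrow>
     (\<forall>x. nrm x \<ge> 0) \<and> (\<forall>x. nrm x = 0 \<longleftrightarrow> x = 0) \<and>
     (\<forall>a x. nrm (a * x) = \<bar>a\<bar> * nrm x) \<and>
     (\<forall>x y. nrm (x + y) \<le> nrm x + nrm y)"

definition states :: "nat \<Rightarrow> real \<Rightarrow> real set" where
  "states m \<delta> = (\<lambda>k. real k * \<delta>) ` {..<m}"

fun work :: "real set \<Rightarrow> (real \<Rightarrow> real) \<Rightarrow> real \<Rightarrow> (nat \<Rightarrow> real \<Rightarrow> real)
              \<Rightarrow> nat \<Rightarrow> real \<Rightarrow> real" where
  "work M nrm \<theta> c 0 x = \<theta> * nrm x"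
| "work M nrm \<theta> c (Suc t) x =
     Min ((\<lambda>y. work M nrm \<theta> c t y + c (Suc t) y + \<theta> * nrm (x - y)) ` M)"

end

theory Submission
  imports Defs
begin

text \<open>The work function is \<open>\<theta>\<close>-Lipschitz for the norm. Let \<open>y\<close> attain the minimum defining
  \<open>w\<^sup>t(z)\<close>. If \<open>c\<^sup>t(y) \<ge> c\<^sup>t(x)\<close>, the Lipschitz bound \<open>w\<^sup>t\<^sup>-\<^sup>1(z) \<le> w\<^sup>t\<^sup>-\<^sup>1(y) + \<theta>\<parallel>z - y\<parallel>\<close>
  already gives the claim. Otherwise, by the hypothesis on \<open>c\<^sup>t\<close>, the point \<open>x\<close> lies between
  \<open>y\<close> and \<open>z\<close>, so \<open>\<parallel>z - y\<parallel> = \<parallel>z - x\<parallel> + \<parallel>x - y\<parallel>\<close> (a norm on \<open>\<real>\<close> is a multiple of \<open>\<bar>\<cdot>\<bar>\<close>), and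
  \<open>w\<^sup>t\<^sup>-\<^sup>1(z) + c\<^sup>t(x) \<le> w\<^sup>t\<^sup>-\<^sup>1(x) + c\<^sup>t(x) + \<theta>\<parallel>z - x\<parallel> = w\<^sup>t(x) + \<theta>\<parallel>z - x\<parallel>
    \<le> w\<^sup>t\<^sup>-\<^sup>1(y) + c\<^sup>t(y) + \<theta>\<parallel>x - y\<parallel> + \<theta>\<parallel>z - x\<parallel> = w\<^sup>t(z)\<close>.\<close>

lemma norm_R_eq_abs_mult:
  assumes "is_norm_R nrm"
  shows "nrm u = \<bar>u\<bar> * nrm 1"
  using assms unfolding is_norm_R_def by (metis mult.right_neutral)

lemma norm_R_triangle:
  assumes "is_norm_R nrm"
  shows "nrm (a + b) \<le> nrm a + nrm b"
  using assms unfolding is_norm_R_def by blast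

lemma norm_R_diff_additive_between:
  assumes "is_norm_R nrm" and "y \<le> x \<and> x \<le> z \<or> z \<le> x \<and> x \<le> y"
  shows "nrm (z - y) = nrm (z - x) + nrm (x - y)"
proof -
  have "\<bar>z - y\<bar> = \<bar>z - x\<bar> + \<bar>x - y\<bar>" using assms(2) by auto
  then show ?thesis
    using norm_R_eq_abs_mult[OF assms(1), of "z - y"] norm_R_eq_abs_mult[OF assms(1), of "z - x"]
      norm_R_eq_abs_mult[OF assms(1), of "x - y"]
    by (simp add: distrib_right)
qed

lemma finite_states: "finite (states m \<delta>)"
  unfolding states_def by simp

lemma states_nonempty: "m \<ge> 1 \<Longrightarrow> states m \<delta> \<noteq> {}"
  unfolding states_def by (auto simp: lessThan_empty_iff)

lemma work_Suc_le:
  assumes "finite M" and "y \<in> M"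
  shows "work M nrm \<theta> c (Suc s) z \<le> work M nrm \<theta> c s y + c (Suc s) y + \<theta> * nrm (z - y)"
  using assms by (auto intro!: Min_le)

lemma work_Suc_attained:
  assumes "finite M" and "M \<noteq> {}"
  obtains y where "y \<in> M"
    and "work M nrm \<theta> c (Suc s) z = work M nrm \<theta> c s y + c (Suc s) y + \<theta> * nrm (z - y)"
proof -
  let ?f = "\<lambda>y. work M nrm \<theta> c s y + c (Suc s) y + \<theta> * nrm (z - y)"
  have "Min (?f ` M) \<in> ?f ` M" using assms by (intro Min_in) auto
  then show ?thesis using that by auto
qed

lemma work_lipschitz:
  assumes "finite M" and "M \<noteq> {}" and "is_norm_R nrm" and "\<theta> \<ge> 0"
  shows "work M nrm \<theta> c s z \<le> work M nrm \<theta> c s y + \<theta> * nrm (z - y)"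
proof (cases s)
  case 0
  have "nrm z \<le> nrm y + nrm (z - y)"
    using norm_R_triangle[OF assms(3), of y "z - y"] by simp
  from mult_left_mono[OF this assms(4)] show ?thesis
    unfolding 0 work.simps(1) distrib_left .
next
  case (Suc s')
  obtain y' where "y' \<in> M"
    and y': "work M nrm \<theta> c (Suc s') y = work M nrm \<theta> c s' y' + c (Suc s') y' + \<theta> * nrm (y - y')"
    using work_Suc_attained[OF assms(1,2)] .
  have "nrm (z - y') \<le> nrm (y - y') + nrm (z - y)"
    using norm_R_triangle[OF assms(3), of "y - y'" "z - y"] by simp
  from mult_left_mono[OF this assms(4)]
  have "\<theta> * nrm (z - y') \<le> \<theta> * nrm (y - y') + \<theta> * nrm (z - y)"
    unfolding distrib_left .
  moreover have "work M nrm \<theta> c (Suc s') z \<le> work M nrm \<theta> c s' y' + c (Suc s') y' + \<theta> * nrm (z - y')"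
    using work_Suc_le[OF assms(1) \<open>y' \<in> M\<close>] .
  ultimately show ?thesis
    unfolding Suc y' by linarith
qed

lemma work_Suc_ge_if_tight:
  assumes "finite M" and "M \<noteq> {}" and "is_norm_R nrm" and "\<theta> \<ge> 0"
    and "x \<in> M" and tight: "work M nrm \<theta> c (Suc s) x = work M nrm \<theta> c s x + c (Suc s) x"
    and "z \<in> M"
    and cheaper_between: "\<And>y. y \<in> M \<Longrightarrow> c (Suc s) y < c (Suc s) x \<Longrightarrow>
                                y \<le> x \<and> x \<le> z \<or> z \<le> x \<and> x \<le> y"
  shows "work M nrm \<theta> c (Suc s) z \<ge> work M nrm \<theta> c s z + c (Suc s) x"
proof -
  let ?W = "work M nrm \<theta> c s" and ?c = "c (Suc s)"
  obtain y where "y \<in> M" and wz: "work M nrm \<theta> c (Suc s) z = ?W y + ?c y + \<theta> * nrm (z - y)"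
    using work_Suc_attained[OF assms(1,2)] by metis
  have lip: "?W a \<le> ?W b + \<theta> * nrm (a - b)" for a b
    using work_lipschitz[OF assms(1-4)] .
  show ?thesis
  proof (cases "?c y < ?c x")
    case True
    then have "nrm (z - y) = nrm (z - x) + nrm (x - y)"
      using norm_R_diff_additive_between[OF assms(3)] cheaper_between[OF \<open>y \<in> M\<close>] by blast
    moreover have "?W x + ?c x \<le> ?W y + ?c y + \<theta> * nrm (x - y)"
      using work_Suc_le[OF assms(1) \<open>y \<in> M\<close>, of nrm \<theta> c s x] tight by simp
    ultimately show ?thesis using lip[of z x] wz by (simp add: distrib_left)
  next
    case False
    then show ?thesis using lip[of z y] wz by simp
  qed
qed

theorem lemma8:
  fixes m :: nat and \<delta> \<theta> :: real and nrm :: "real \<Rightarrow> real"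
    and c :: "nat \<Rightarrow> real \<Rightarrow> real" and t :: nat and x :: real
  assumes hm: "m \<ge> 1" and h\<delta>: "\<delta> > 0"
    and hnorm: "is_norm_R nrm" and h\<theta>: "\<theta> \<ge> 1"
    and hc: "\<And>s y. y \<in> states m \<delta> \<Longrightarrow> c s y \<ge> 0"
    and ht: "t \<ge> 1"
    and hx: "x \<in> states m \<delta>"
    and hw: "work (states m \<delta>) nrm \<theta> c t x = work (states m \<delta>) nrm \<theta> c (t - 1) x + c t x"
  shows "((\<forall>z \<in> states m \<delta>. z \<ge> x \<longrightarrow> c t z \<ge> c t x) \<longrightarrow>
            (\<forall>z \<in> states m \<delta>. z \<ge> x \<longrightarrow>
               work (states m \<delta>) nrm \<theta> c t z \<ge> work (states m \<delta>) nrm \<theta> c (t - 1) z + c t x))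
       \<and> ((\<forall>z \<in> states m \<delta>. z \<le> x \<longrightarrow> c t z \<ge> c t x) \<longrightarrow>
            (\<forall>z \<in> states m \<delta>. z \<le> x \<longrightarrow>
               work (states m \<delta>) nrm \<theta> c t z \<ge> work (states m \<delta>) nrm \<theta> c (t - 1) z + c t x))"
proof -
  obtain s where t: "t = Suc s" using ht by (cases t) auto
  have "\<theta> \<ge> 0" using h\<theta> by simp
  note ge_if_tight = work_Suc_ge_if_tight[OF finite_states states_nonempty[OF hm] hnorm
      \<open>\<theta> \<ge> 0\<close> hx hw[unfolded t diff_Suc_1]]
  show ?thesis
    unfolding t diff_Suc_1
  proof (intro conjI impI ballI)
    fix z assume up: "\<forall>y \<in> states m \<delta>. y \<ge> x \<longrightarrow> c (Suc s) y \<ge> c (Suc s) x"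
      and "z \<in> states m \<delta>" and "z \<ge> x"
    show "work (states m \<delta>) nrm \<theta> c (Suc s) z \<ge> work (states m \<delta>) nrm \<theta> c s z + c (Suc s) x"
    proof (rule ge_if_tight[OF \<open>z \<in> states m \<delta>\<close>])
      fix y assume "y \<in> states m \<delta>" and "c (Suc s) y < c (Suc s) x"
      with up have "y \<le> x" using not_le by fastforce
      with \<open>z \<ge> x\<close> show "y \<le> x \<and> x \<le> z \<or> z \<le> x \<and> x \<le> y" by simp
    qed
  next
    fix z assume down: "\<forall>y \<in> states m \<delta>. y \<le> x \<longrightarrow> c (Suc s) y \<ge> c (Suc s) x"
      and "z \<in> states m \<delta>" and "z \<le> x"
    show "work (states m \<delta>) nrm \<theta> c (Suc s) z \<ge> work (states m \<delta>) nrm \<theta> c s z + c (Suc s) x"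
    proof (rule ge_if_tight[OF \<open>z \<in> states m \<delta>\<close>])
      fix y assume "y \<in> states m \<delta>" and "c (Suc s) y < c (Suc s) x"
      with down have "x \<le> y" using not_le by fastforce
      with \<open>z \<le> x\<close> show "y \<le> x \<and> x \<le> z \<or> z \<le> x \<and> x \<le> y" by simp
    qed
  qed
qed

end
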